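(* For $\alpha_1,\alpha_2>0$, let $V_{\alpha_i}=\frac{1}{4(1+2\alpha_i)}$ be the variance of the Beta$(\alpha_i,\alpha_i)$ law. Then $V_{\alpha_1}\ge V_{\alpha_2}$ if and only if $F_{\alpha_1}\preceq_{\text{ssd}}F_{\alpha_2}$.
   Context: $F_\alpha$ denotes the distribution function of the symmetric Beta$(\alpha,\alpha)$ law on $[0,1]$. $F_1\preceq_{\text{ssd}}F_2$ means $\int_0^xF_2(t)dt\le\int_0^xF_1(t)dt$ for all $x\in[0,1]$. *)

theory Defs
  imports "HOL-Analysis.Analysis"
begin

definition beta_density :: "real \<Rightarrow> real \<Rightarrow> real" where
  "beta_density a t = t powr (a - 1) * (1 - t) powr (a - 1) / Beta a a"

definition beta_cdf :: "real \<Rightarrow> real \<Rightarrow> real" where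
  "beta_cdf a x = integral {0..x} (beta_density a)"

definition beta_var :: "real \<Rightarrow> real" where
  "beta_var a = 1 / (4 * (1 + 2 * a))"

definition ssd_le :: "(real \<Rightarrow> real) \<Rightarrow> (real \<Rightarrow> real) \<Rightarrow> bool" where
  "ssd_le F1 F2 \<longleftrightarrow> (\<forall>x\<in>{0..1}. integral {0..x} F2 \<le> integral {0..x} F1)"

end

theory Submission imports Defs begin

text \<open>For \<open>a < b\<close> the density ratio \<open>f\<^sub>a / f\<^sub>b\<close> is a positive multiple of
  \<open>(t (1 - t)) powr (a - b)\<close>, hence decreasing on \<open>(0, 1/2]\<close>. Comparing the two densities with
  the constant \<open>k\<close> that the ratio takes at a point \<open>x\<close> gives \<open>F\<^sub>a x \<ge> k F\<^sub>b x\<close> and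
  \<open>1/2 - F\<^sub>a x \<le> k (1/2 - F\<^sub>b x)\<close>; according to \<open>k \<ge> 1\<close> or \<open>k < 1\<close> one of them yields
  \<open>F\<^sub>b \<le> F\<^sub>a\<close> on \<open>[0, 1/2]\<close>, strictly wherever \<open>k \<noteq> 1\<close>. By the symmetry
  \<open>F (1 - x) = 1 - F x\<close> the integrated difference \<open>\<integral>\<^sub>0\<^sup>y (F\<^sub>a - F\<^sub>b)\<close> is invariant under
  \<open>y \<mapsto> 1 - y\<close>, so it is nonnegative on \<open>[0, 1]\<close> and positive at \<open>1/2\<close>. As the variance is
  decreasing in the parameter, this is the claimed equivalence.\<close>

lemma Beta_real_pos: "a > 0 \<Longrightarrow> b > 0 \<Longrightarrow> Beta a b > (0::real)"
  unfolding Beta_def using Gamma_real_pos[of a] Gamma_real_pos[of b] Gamma_real_pos[of "a + b"]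
  by simp

lemma integral_reflect_unit_interval:
  fixes g :: "real \<Rightarrow> 'a::banach"
  shows "integral {y..1} g = integral {0..1 - y} (\<lambda>s. g (1 - s))"
proof -
  have "integral {0..1 - y} (\<lambda>s. g (1 - s)) = integral {y - 1..0} (\<lambda>u. g (u + 1))"
    using Henstock_Kurzweil_Integration.integral_reflect_real[where a = "y - 1" and b = 0
        and f = "\<lambda>u. g (u + 1)"]
    by simp
  also have "\<dots> = integral {y..1} g"
    using integral_shift_real_ivl[of y 1 1 g] by simp
  finally show ?thesis ..
qed

lemma integral_point_symmetric:
  fixes F :: "real \<Rightarrow> real"
  assumes F_int: "F integrable_on {0..1}"
    and F_sym: "\<And>s. s \<in> {0..1} \<Longrightarrow> F (1 - s) = 1 - F s"
    and y: "0 \<le> y" "y \<le> 1"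
  shows "integral {0..y} F = y - 1/2 + integral {0..1 - y} F"
proof -
  have tail: "integral {z..1} F = (1 - z) - integral {0..1 - z} F"
    if z: "0 \<le> z" "z \<le> 1" for z
  proof -
    have "integral {z..1} F = integral {0..1 - z} (\<lambda>s. 1 - F s)"
      unfolding integral_reflect_unit_interval using z F_sym by (intro integral_cong) auto
    also have "\<dots> = integral {0..1 - z} (\<lambda>s. 1) - integral {0..1 - z} F"
      using z integrable_subinterval_real[OF F_int, of 0 "1 - z"] by (intro integral_diff) auto
    also have "\<dots> = (1 - z) - integral {0..1 - z} F"
      using z by simp
    finally show ?thesis .
  qed
  have combine: "integral {0..z} F + integral {z..1} F = integral {0..1} F"
    if "0 \<le> z" "z \<le> 1" for z
    using Henstock_Kurzweil_Integration.integral_combine[OF that F_int] .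
  have "integral {0..1} F = 1/2"
    using tail[of 0] combine[of 0] by simp
  with tail[OF y] combine[OF y] show ?thesis by linarith
qed

text \<open>Single crossing: \<open>G\<close> and \<open>F\<close> are the masses that two distributions of total mass
  \<open>T\<close> put left of a point where the ratio of their densities, equal to \<open>k\<close> there, crosses
  from above \<open>k\<close> to below \<open>k\<close>.\<close>

lemma single_crossing_le:
  fixes F G T k :: real
  assumes "k * G \<le> F" "T - F \<le> k * (T - G)" "0 \<le> G" "G \<le> T"
  shows "G \<le> F"
proof (cases "k \<ge> 1")
  case True
  then have "G \<le> k * G" using \<open>0 \<le> G\<close> by (simp add: mult_le_cancel_right1)
  with assms show ?thesis by linarith
next
  case False
  then have "k * (T - G) \<le> T - G" using \<open>G \<le> T\<close> mult_right_mono[of k 1 "T - G"] by simp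
  with assms show ?thesis by linarith
qed

lemma single_crossing_less:
  fixes F G T k :: real
  assumes "k * G \<le> F" "T - F \<le> k * (T - G)" "0 < G" "G < T" "k \<noteq> 1"
  shows "G < F"
proof (cases "k > 1")
  case True
  then have "G < k * G" using \<open>0 < G\<close> by simp
  with assms show ?thesis by linarith
next
  case False
  then have "k * (T - G) < T - G" using assms mult_strict_right_mono[of k 1 "T - G"] by simp
  with assms show ?thesis by linarith
qed

lemma beta_density_nonneg: "a > 0 \<Longrightarrow> beta_density a t \<ge> 0"
  unfolding beta_density_def using Beta_real_pos[of a a] by simp

lemma beta_density_pos: "a > 0 \<Longrightarrow> 0 < t \<Longrightarrow> t < 1 \<Longrightarrow> beta_density a t > 0"
  unfolding beta_density_def using Beta_real_pos[of a a] by simp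

lemma beta_density_zero [simp]: "beta_density a 0 = 0"
  unfolding beta_density_def by simp

lemma beta_density_reflect: "beta_density a (1 - t) = beta_density a t"
  unfolding beta_density_def by simp

lemma has_integral_beta_density: "a > 0 \<Longrightarrow> (beta_density a has_integral 1) {0..1}"
  using has_integral_divide[OF has_integral_Beta_real, of a a "Beta a a"] Beta_real_pos[of a a]
  unfolding beta_density_def[abs_def] by simp

lemma beta_density_integrable:
  "a > 0 \<Longrightarrow> 0 \<le> c \<Longrightarrow> d \<le> 1 \<Longrightarrow> beta_density a integrable_on {c..d}"
  using has_integral_beta_density integrable_subinterval_real
  by (metis atLeastatMost_subset_iff has_integral_integrable)

lemma beta_density_continuous_on:
  "a > 0 \<Longrightarrow> 0 < c \<Longrightarrow> d < 1 \<Longrightarrow> continuous_on {c..d} (beta_density a)"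
  unfolding beta_density_def[abs_def] using Beta_real_pos[of a a]
  by (intro continuous_intros) auto

lemma integral_beta_density_pos:
  assumes a: "a > 0" and cd: "0 \<le> c" "c < d" "d \<le> 1"
  shows "integral {c..d} (beta_density a) > 0"
proof -
  define c' d' where "c' = (2 * c + d) / 3" and "d' = (c + 2 * d) / 3"
  have "0 = integral {c'..d'} (\<lambda>_. 0::real)" by simp
  also have "\<dots> < integral {c'..d'} (beta_density a)"
    using a cd beta_density_continuous_on beta_density_pos unfolding c'_def d'_def
    by (intro integral_less_real) auto
  also have "\<dots> \<le> integral {c..d} (beta_density a)"
    using a cd beta_density_integrable beta_density_nonneg unfolding c'_def d'_def
    by (intro integral_subset_le) auto
  finally show ?thesis .
qed

definition beta_density_ratio :: "real \<Rightarrow> real \<Rightarrow> real \<Rightarrow> real" where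
  "beta_density_ratio a b t = Beta b b / Beta a a * (t * (1 - t)) powr (a - b)"

lemma beta_density_eq_ratio_mult:
  assumes "0 < t" "t < 1" "b > 0"
  shows "beta_density a t = beta_density_ratio a b t * beta_density b t"
proof -
  have "beta_density c t = (t * (1 - t)) powr (c - 1) / Beta c c" for c
    unfolding beta_density_def using assms by (simp add: powr_mult)
  moreover have "(t * (1 - t)) powr (a - b) * (t * (1 - t)) powr (b - 1) = (t * (1 - t)) powr (a - 1)"
    by (simp add: powr_add[symmetric])
  ultimately show ?thesis
    using Beta_real_pos[of b b] assms unfolding beta_density_ratio_def by (simp add: field_simps)
qed

lemma mult_one_minus_strict_mono:
  fixes s t :: real
  assumes "s < t" "t \<le> 1/2"
  shows "s * (1 - s) < t * (1 - t)"
proof -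
  have "t * (1 - t) - s * (1 - s) = (t - s) * (1 - t - s)" by algebra
  moreover have "(t - s) * (1 - t - s) > 0" using assms by (intro mult_pos_pos) auto
  ultimately show ?thesis by linarith
qed

lemma beta_density_ratio_strict_antimono:
  assumes "0 < a" "a < b" "0 < s" "s < t" "t \<le> 1/2"
  shows "beta_density_ratio a b t < beta_density_ratio a b s"
  unfolding beta_density_ratio_def using assms mult_one_minus_strict_mono[of s t] Beta_real_pos
  by (intro mult_strict_left_mono powr_less_mono2_neg) auto

lemma beta_density_ratio_antimono:
  assumes "0 < a" "a < b" "0 < s" "s \<le> t" "t \<le> 1/2"
  shows "beta_density_ratio a b t \<le> beta_density_ratio a b s"
  using beta_density_ratio_strict_antimono[of a b s t] assms by (cases "s = t") auto

lemma beta_cdf_reflect: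
  assumes a: "a > 0" and x: "0 \<le> x" "x \<le> 1"
  shows "beta_cdf a (1 - x) = 1 - beta_cdf a x"
proof -
  have "beta_cdf a (1 - x) = integral {x..1} (beta_density a)"
    unfolding beta_cdf_def integral_reflect_unit_interval by (simp add: beta_density_reflect)
  also have "\<dots> = 1 - beta_cdf a x"
    using Henstock_Kurzweil_Integration.integral_combine[OF x beta_density_integrable[OF a, of 0 1]]
      integral_unique[OF has_integral_beta_density[OF a]]
    unfolding beta_cdf_def by linarith
  finally show ?thesis .
qed

lemma beta_cdf_half: "a > 0 \<Longrightarrow> beta_cdf a (1/2) = 1/2"
  using beta_cdf_reflect[of a "1/2"] by simp

lemma beta_cdf_continuous_on: "a > 0 \<Longrightarrow> continuous_on {0..1} (beta_cdf a)"
  unfolding beta_cdf_def[abs_def]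
  using indefinite_integral_continuous_1 has_integral_integrable has_integral_beta_density by blast

lemma beta_cdf_integrable:
  "a > 0 \<Longrightarrow> 0 \<le> c \<Longrightarrow> d \<le> 1 \<Longrightarrow> beta_cdf a integrable_on {c..d}"
  by (meson atLeastatMost_subset_iff beta_cdf_continuous_on continuous_on_subset
      integrable_continuous_interval order_refl)

lemma beta_cdf_pos: "a > 0 \<Longrightarrow> 0 < x \<Longrightarrow> x \<le> 1 \<Longrightarrow> beta_cdf a x > 0"
  unfolding beta_cdf_def using integral_beta_density_pos by simp

lemma integral_beta_density_to_half:
  assumes a: "a > 0" and x: "0 \<le> x" "x \<le> 1/2"
  shows "integral {x..1/2} (beta_density a) = 1/2 - beta_cdf a x"
  using Henstock_Kurzweil_Integration.integral_combine[OF x beta_density_integrable[OF a, of 0 "1/2"]]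
    beta_cdf_half[OF a]
  unfolding beta_cdf_def by simp

lemma beta_cdf_less_half: "a > 0 \<Longrightarrow> 0 \<le> x \<Longrightarrow> x < 1/2 \<Longrightarrow> beta_cdf a x < 1/2"
  using integral_beta_density_to_half[of a x] integral_beta_density_pos[of a x "1/2"] by simp

lemma beta_cdf_density_ratio_bounds:
  assumes ab: "0 < a" "a < b" and x: "0 < x" "x \<le> 1/2"
  defines "k \<equiv> beta_density_ratio a b x"
  shows "k * beta_cdf b x \<le> beta_cdf a x"
    and "1/2 - beta_cdf a x \<le> k * (1/2 - beta_cdf b x)"
proof -
  have b: "b > 0" using ab by simp
  have left: "k * beta_density b s \<le> beta_density a s" if s: "s \<in> {0..x}" for s
  proof (cases "s = 0")
    case False
    then have "k \<le> beta_density_ratio a b s"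
      unfolding k_def using s x ab by (intro beta_density_ratio_antimono) auto
    then show ?thesis
      using s x b False beta_density_eq_ratio_mult[of s b a] beta_density_nonneg[OF b, of s]
      by (simp add: mult_right_mono)
  qed simp
  have right: "beta_density a s \<le> k * beta_density b s" if s: "s \<in> {x..1/2}" for s
  proof -
    have "beta_density_ratio a b s \<le> k"
      unfolding k_def using s x ab by (intro beta_density_ratio_antimono) auto
    then show ?thesis
      using s x b beta_density_eq_ratio_mult[of s b a] beta_density_nonneg[OF b, of s]
      by (simp add: mult_right_mono)
  qed
  have "integral {0..x} (\<lambda>s. k * beta_density b s) \<le> beta_cdf a x"
    unfolding beta_cdf_def using left x ab beta_density_integrable
      integrable_on_mult_right[OF beta_density_integrable[OF b, of 0 x]]
    by (intro integral_le) auto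
  then show "k * beta_cdf b x \<le> beta_cdf a x"
    unfolding beta_cdf_def by simp
  have "integral {x..1/2} (beta_density a) \<le> integral {x..1/2} (\<lambda>s. k * beta_density b s)"
    using right x ab beta_density_integrable
      integrable_on_mult_right[OF beta_density_integrable[OF b, of x "1/2"]]
    by (intro integral_le) auto
  then show "1/2 - beta_cdf a x \<le> k * (1/2 - beta_cdf b x)"
    using integral_beta_density_to_half[of a x] integral_beta_density_to_half[of b x] ab x by simp
qed

lemma beta_cdf_antimono_param:
  assumes ab: "0 < a" "a \<le> b" and x: "0 \<le> x" "x \<le> 1/2"
  shows "beta_cdf b x \<le> beta_cdf a x"
proof (cases "x = 0 \<or> a = b")
  case False
  then have "0 < x" "a < b" using ab x by auto
  have "0 \<le> beta_cdf b x"
    using beta_cdf_pos[of b x] \<open>0 < x\<close> x ab by simp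
  moreover have "beta_cdf b x \<le> 1/2"
  proof (cases "x = 1/2")
    case True
    show ?thesis unfolding True using beta_cdf_half[of b] ab by simp
  qed (use beta_cdf_less_half[of b x] x ab in auto)
  ultimately show ?thesis
    using single_crossing_le[OF beta_cdf_density_ratio_bounds[OF ab(1) \<open>a < b\<close> \<open>0 < x\<close> x(2)]]
    by blast
qed (auto simp: beta_cdf_def)

lemma beta_cdf_strict_antimono_param:
  assumes ab: "0 < a" "a < b" and x: "0 < x" "x < 1/2" and k: "beta_density_ratio a b x \<noteq> 1"
  shows "beta_cdf b x < beta_cdf a x"
proof -
  have "0 < beta_cdf b x" "beta_cdf b x < 1/2"
    using beta_cdf_pos[of b x] beta_cdf_less_half[of b x] x ab by auto
  with k show ?thesis
    using single_crossing_less[OF beta_cdf_density_ratio_bounds[OF ab x(1) less_imp_le[OF x(2)]]]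
    by blast
qed

lemma integral_beta_cdf_reflect:
  assumes a: "a > 0" and y: "0 \<le> y" "y \<le> 1"
  shows "integral {0..y} (beta_cdf a) = y - 1/2 + integral {0..1 - y} (beta_cdf a)"
  by (rule integral_point_symmetric[OF beta_cdf_integrable[OF a order_refl order_refl] _ y])
    (use a beta_cdf_reflect in auto)

lemma integral_beta_cdf_antimono_param:
  assumes ab: "0 < a" "a \<le> b" and y: "0 \<le> y" "y \<le> 1"
  shows "integral {0..y} (beta_cdf b) \<le> integral {0..y} (beta_cdf a)"
proof -
  have half: "integral {0..z} (beta_cdf b) \<le> integral {0..z} (beta_cdf a)"
    if "0 \<le> z" "z \<le> 1/2" for z
    by (rule integral_le) (use that ab beta_cdf_antimono_param beta_cdf_integrable in auto)
  show ?thesis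
  proof (cases "y \<le> 1/2")
    case False
    then show ?thesis
      using half[of "1 - y"] integral_beta_cdf_reflect[of a y] integral_beta_cdf_reflect[of b y] ab y
      by simp
  qed (use half y in auto)
qed

text \<open>Strictness is obtained on \<open>[0, 1/4]\<close> or on \<open>[1/4, 1/2]\<close>, depending on which side of
  \<open>1/4\<close> the density ratio crosses \<open>1\<close>.\<close>

lemma integral_beta_cdf_half_strict_antimono_param:
  assumes ab: "0 < a" "a < b"
  shows "integral {0..1/2} (beta_cdf b) < integral {0..1/2} (beta_cdf a)"
proof -
  have b: "b > 0" using ab by simp
  have combine: "integral {0..1/4} (beta_cdf c) + integral {1/4..1/2} (beta_cdf c)
      = integral {0..1/2} (beta_cdf c)" if "c > 0" for c
    using that beta_cdf_integrable
    by (intro Henstock_Kurzweil_Integration.integral_combine) auto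
  have cont: "continuous_on {u..v} (beta_cdf c)" if "c > 0" "0 \<le> u" "v \<le> 1" for c u v
    using beta_cdf_continuous_on[OF that(1)] that by (auto elim: continuous_on_subset)
  have le: "integral {u..v} (beta_cdf b) \<le> integral {u..v} (beta_cdf a)"
    if "0 \<le> u" "v \<le> 1/2" for u v
    by (rule integral_le) (use that ab beta_cdf_antimono_param beta_cdf_integrable in auto)
  show ?thesis
  proof (cases "beta_density_ratio a b (1/4) \<ge> 1")
    case True
    have "integral {0..1/4} (beta_cdf b) < integral {0..1/4} (beta_cdf a)"
    proof (rule integral_less_real)
      fix x :: real assume x: "x \<in> {0<..<1/4}"
      with True beta_density_ratio_strict_antimono[OF ab, of x "1/4"]
      have "beta_density_ratio a b x \<noteq> 1" by auto
      with x show "beta_cdf b x < beta_cdf a x"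
        using beta_cdf_strict_antimono_param[OF ab] by auto
    qed (use cont ab b in auto)
    with combine[OF ab(1)] combine[OF b] le[of "1/4" "1/2"] show ?thesis by linarith
  next
    case False
    have "integral {1/4..1/2} (beta_cdf b) < integral {1/4..1/2} (beta_cdf a)"
    proof (rule integral_less_real)
      fix x :: real assume x: "x \<in> {1/4<..<1/2}"
      with False beta_density_ratio_strict_antimono[OF ab, of "1/4" x]
      have "beta_density_ratio a b x \<noteq> 1" by auto
      with x show "beta_cdf b x < beta_cdf a x"
        using beta_cdf_strict_antimono_param[OF ab] by auto
    qed (use cont ab b in auto)
    with combine[OF ab(1)] combine[OF b] le[of 0 "1/4"] show ?thesis by linarith
  qed
qed

lemma beta_var_le_iff: "a > 0 \<Longrightarrow> b > 0 \<Longrightarrow> beta_var b \<le> beta_var a \<longleftrightarrow> a \<le> b"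
  unfolding beta_var_def by (simp add: frac_le_eq divide_le_eq field_simps)

theorem corollary3:
  fixes a1 a2 :: real
  assumes "a1 > 0" and "a2 > 0"
  shows "beta_var a1 \<ge> beta_var a2 \<longleftrightarrow> ssd_le (beta_cdf a1) (beta_cdf a2)"
proof -
  have "ssd_le (beta_cdf a1) (beta_cdf a2)" if "a1 \<le> a2"
    unfolding ssd_le_def using integral_beta_cdf_antimono_param[of a1 a2] assms that by auto
  moreover have "a1 \<le> a2" if "ssd_le (beta_cdf a1) (beta_cdf a2)"
  proof -
    from that have "integral {0..1/2} (beta_cdf a2) \<le> integral {0..1/2} (beta_cdf a1)"
      unfolding ssd_le_def by auto
    then show ?thesis
      using integral_beta_cdf_half_strict_antimono_param[of a2 a1] assms by force
  qed
  ultimately show ?thesis using beta_var_le_iff[OF assms] by blast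
qed

end
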